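(* Let $\mathcal M=(W,W_\bot,\preccurlyeq,\sqsubseteq,V)$ be a bi-intuitionistic model of finite height $n$, and let $\Sigma$ be a finite set of formulas with $\#\Sigma=s$. Then the number of $\sim_\Sigma$-equivalence classes satisfies $\#(W/{\sim_\Sigma})\le 2^{2(n+1)s}_{n+2}$.
   Context: Formulas: $p\mid\bot\mid\varphi\wedge\psi\mid\varphi\vee\psi\mid\varphi\to\psi\mid\Diamond\varphi\mid\Box\varphi$ over a countably infinite set $\mathbb P$. A bi-intuitionistic model $(W,W_\bot,\preccurlyeq,\sqsubseteq,V)$: $\preccurlyeq,\sqsubseteq$ preorders on $W$, $W_\bot$ upward closed under both, $V:\mathbb P\to2^W$ with $V(p)$ $\preccurlyeq$-upward closed and $\supseteq W_\bot$. Satisfaction: $p$ iff $w\in V(p)$; $\bot$ iff $w\in W_\bot$; $\wedge,\vee$ pointwise; $w\models\varphi\to\psi$ iff for all $v\succcurlyeq w$, $v\models\varphi$ implies $v\models\psi$; $w\models\Diamond\varphi$ iff for all $u\succcurlyeq w$ there is $v\sqsupseteq u$ with $v\models\varphi$; $w\models\Box\varphi$ iff $v\models\varphi$ whenever $w\preccurlyeq u\sqsubseteq v$. $w\prec v$ means $w\preccurlyeq v$ and $v\not\preccurlyeq w$. The height of $w$ is the supremum of $n$ such that there is a chain $w=w_0\prec\cdots\prec w_n$; the height of $\mathcal M$ is the supremum of heights of its worlds. For $R\subseteq W\times W$: forward confluent if $w\preccurlyeq w'$, $wRv$ imply some $v'$ with $v\preccurlyeq v'$, $w'Rv'$; backward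 confluent if $wRv\preccurlyeq v'$ implies some $w'$ with $w\preccurlyeq w'Rv'$. The $\Sigma$-label of $w$ is $\ell(w)=(\ell^+(w);\ell^\Diamond(w))$ with $\ell^+(w)=\{\varphi\in\Sigma:(\mathcal M,w)\models\varphi\}$, $\ell^\Diamond(w)=\{\varphi\in\Sigma:\forall v\sqsupseteq w,\ (\mathcal M,v)\not\models\varphi\}$. A $\Sigma$-bisimulation is a forward and backward confluent $Z\subseteq W\times W$ with $wZv\Rightarrow\ell(w)=\ell(v)$; $\sim_\Sigma$ is the greatest $\Sigma$-bisimulation (the union of all of them), which is an equivalence relation. Superexponential: $2^x_0=x$ and $2^x_{y+1}=2^{2^x_y}$. *)

theory Defs
  imports Main
begin

datatype fm = Atom nat | Bot | And fm fm | Or fm fm | Imp fm fm | Dia fm | Box fm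

definition preorder_rel :: "'w set \<Rightarrow> ('w \<times> 'w) set \<Rightarrow> bool" where
  "preorder_rel W R \<longleftrightarrow> R \<subseteq> W \<times> W \<and> (\<forall>w\<in>W. (w, w) \<in> R) \<and> trans R"

definition bi_model :: "'w set \<Rightarrow> 'w set \<Rightarrow> ('w \<times> 'w) set \<Rightarrow> ('w \<times> 'w) set \<Rightarrow> (nat \<Rightarrow> 'w set) \<Rightarrow> bool" where
  "bi_model W Wb le sq V \<longleftrightarrow>
     preorder_rel W le \<and> preorder_rel W sq \<and> Wb \<subseteq> W \<and>
     (\<forall>w v. w \<in> Wb \<and> (w, v) \<in> le \<longrightarrow> v \<in> Wb) \<and>
     (\<forall>w v. w \<in> Wb \<and> (w, v) \<in> sq \<longrightarrow> v \<in> Wb) \<and>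
     (\<forall>p. V p \<subseteq> W \<and> Wb \<subseteq> V p \<and> (\<forall>w v. w \<in> V p \<and> (w, v) \<in> le \<longrightarrow> v \<in> V p))"

primrec sat :: "'w set \<Rightarrow> 'w set \<Rightarrow> ('w \<times> 'w) set \<Rightarrow> ('w \<times> 'w) set \<Rightarrow> (nat \<Rightarrow> 'w set) \<Rightarrow> 'w \<Rightarrow> fm \<Rightarrow> bool" where
  "sat W Wb le sq V w (Atom p) = (w \<in> V p)"
| "sat W Wb le sq V w Bot = (w \<in> Wb)"
| "sat W Wb le sq V w (And a b) = (sat W Wb le sq V w a \<and> sat W Wb le sq V w b)"
| "sat W Wb le sq V w (Or a b) = (sat W Wb le sq V w a \<or> sat W Wb le sq V w b)"
| "sat W Wb le sq V w (Imp a b) =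
     (\<forall>v. (w, v) \<in> le \<longrightarrow> sat W Wb le sq V v a \<longrightarrow> sat W Wb le sq V v b)"
| "sat W Wb le sq V w (Dia a) =
     (\<forall>u. (w, u) \<in> le \<longrightarrow> (\<exists>v. (u, v) \<in> sq \<and> sat W Wb le sq V v a))"
| "sat W Wb le sq V w (Box a) =
     (\<forall>u v. (w, u) \<in> le \<longrightarrow> (u, v) \<in> sq \<longrightarrow> sat W Wb le sq V v a)"

definition strict_le :: "('w \<times> 'w) set \<Rightarrow> 'w \<Rightarrow> 'w \<Rightarrow> bool" where
  "strict_le le w v \<longleftrightarrow> (w, v) \<in> le \<and> (v, w) \<notin> le"

definition has_chain :: "'w set \<Rightarrow> ('w \<times> 'w) set \<Rightarrow> 'w \<Rightarrow> nat \<Rightarrow> bool" where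
  "has_chain W le w k \<longleftrightarrow>
     (\<exists>f :: nat \<Rightarrow> 'w. f 0 = w \<and> (\<forall>i\<le>k. f i \<in> W) \<and> (\<forall>i<k. strict_le le (f i) (f (Suc i))))"

definition model_height :: "'w set \<Rightarrow> ('w \<times> 'w) set \<Rightarrow> nat \<Rightarrow> bool" where
  "model_height W le n \<longleftrightarrow>
     (\<exists>w\<in>W. has_chain W le w n) \<and> (\<forall>w\<in>W. \<forall>k. has_chain W le w k \<longrightarrow> k \<le> n)"

definition label_pos :: "'w set \<Rightarrow> 'w set \<Rightarrow> ('w \<times> 'w) set \<Rightarrow> ('w \<times> 'w) set \<Rightarrow> (nat \<Rightarrow> 'w set) \<Rightarrow> fm set \<Rightarrow> 'w \<Rightarrow> fm set" where
  "label_pos W Wb le sq V \<Sigma> w = {\<phi> \<in> \<Sigma>. sat W Wb le sq V w \<phi>}"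

definition label_dia :: "'w set \<Rightarrow> 'w set \<Rightarrow> ('w \<times> 'w) set \<Rightarrow> ('w \<times> 'w) set \<Rightarrow> (nat \<Rightarrow> 'w set) \<Rightarrow> fm set \<Rightarrow> 'w \<Rightarrow> fm set" where
  "label_dia W Wb le sq V \<Sigma> w = {\<phi> \<in> \<Sigma>. \<forall>v. (w, v) \<in> sq \<longrightarrow> \<not> sat W Wb le sq V v \<phi>}"

definition forward_confluent :: "('w \<times> 'w) set \<Rightarrow> ('w \<times> 'w) set \<Rightarrow> bool" where
  "forward_confluent le R \<longleftrightarrow>
     (\<forall>w w' v. (w, w') \<in> le \<and> (w, v) \<in> R \<longrightarrow> (\<exists>v'. (v, v') \<in> le \<and> (w', v') \<in> R))"

definition backward_confluent :: "('w \<times> 'w) set \<Rightarrow> ('w \<times> 'w) set \<Rightarrow> bool" where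
  "backward_confluent le R \<longleftrightarrow>
     (\<forall>w v v'. (w, v) \<in> R \<and> (v, v') \<in> le \<longrightarrow> (\<exists>w'. (w, w') \<in> le \<and> (w', v') \<in> R))"

definition sigma_bisim :: "'w set \<Rightarrow> 'w set \<Rightarrow> ('w \<times> 'w) set \<Rightarrow> ('w \<times> 'w) set \<Rightarrow> (nat \<Rightarrow> 'w set) \<Rightarrow> fm set \<Rightarrow> ('w \<times> 'w) set \<Rightarrow> bool" where
  "sigma_bisim W Wb le sq V \<Sigma> Z \<longleftrightarrow>
     Z \<subseteq> W \<times> W \<and> forward_confluent le Z \<and> backward_confluent le Z \<and>
     (\<forall>w v. (w, v) \<in> Z \<longrightarrow>
        label_pos W Wb le sq V \<Sigma> w = label_pos W Wb le sq V \<Sigma> v \<and>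
        label_dia W Wb le sq V \<Sigma> w = label_dia W Wb le sq V \<Sigma> v)"

definition sigma_sim :: "'w set \<Rightarrow> 'w set \<Rightarrow> ('w \<times> 'w) set \<Rightarrow> ('w \<times> 'w) set \<Rightarrow> (nat \<Rightarrow> 'w set) \<Rightarrow> fm set \<Rightarrow> ('w \<times> 'w) set" where
  "sigma_sim W Wb le sq V \<Sigma> = \<Union> {Z. sigma_bisim W Wb le sq V \<Sigma> Z}"

primrec sexp :: "nat \<Rightarrow> nat \<Rightarrow> nat" where
  "sexp x 0 = x"
| "sexp x (Suc y) = 2 ^ sexp x y"

end

theory Submission
  imports Defs
begin

text \<open>Give each world its local type: its positive \<Sigma>-label, its \<Diamond>-label, and the set of
  \<Diamond>-labels occurring in its \<preccurlyeq>-cluster. The level-(k+1) signature of w adds to its local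
  type the set of level-k signatures of its strict \<preccurlyeq>-successors. By induction on the height,
  for worlds of height at most k the level-k signature already determines the level-(k+1) one;
  hence in a model of height n, having equal level-(n+1) signatures is a \<Sigma>-bisimulation and
  worlds with equal level-n signatures are \<Sigma>-bisimilar. There are fewer than 2^(2s+2^s)
  local types, and each further level at most exponentiates the number of
  signatures, which yields the tower bound.\<close>

lemma pow2_add_le: "2 ^ a + 2 ^ b \<le> 2 ^ (a + b) + (1::nat)"
proof -
  obtain a' b' where "(2::nat) ^ a = Suc a'" "(2::nat) ^ b = Suc b'"
    by (metis not0_implies_Suc power_not_zero zero_neq_numeral)
  then show ?thesis by (simp add: power_add)
qed

lemma sexp_add: "sexp x m + d \<le> sexp (x + d) m"
proof (induction m)
  case 0
  then show ?case by simp
next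
  case (Suc m)
  have "2 ^ sexp x m + d < 2 ^ sexp x m + 2 ^ d"
    using less_exp[of d] by simp
  also have "\<dots> \<le> 2 ^ (sexp x m + d) + 1"
    by (rule pow2_add_le)
  finally have "2 ^ sexp x m + d \<le> (2::nat) ^ (sexp x m + d)" by simp
  also have "\<dots> \<le> 2 ^ sexp (x + d) m"
    using Suc.IH by (intro power_increasing) auto
  finally show ?case by simp
qed

lemma sexp_Suc_add: "sexp x (Suc m) + 2 ^ d \<le> sexp (x + d) (Suc m) + 1"
proof -
  have "sexp x (Suc m) + 2 ^ d \<le> 2 ^ (sexp x m + d) + 1"
    using pow2_add_le by simp
  also have "(2::nat) ^ (sexp x m + d) \<le> 2 ^ sexp (x + d) m"
    using sexp_add by (intro power_increasing) auto
  finally show ?thesis by simp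
qed

lemma two_mul_add_pow2_le: "2 * s + 2 ^ s \<le> (2::nat) ^ (2 * s)"
proof (induction s)
  case 0
  then show ?case by simp
next
  case (Suc s)
  have "(2::nat) ^ (2 * Suc s) = 4 * 2 ^ (2 * s)"
    by (simp add: power_mult)
  moreover have "(2::nat) ^ Suc s = 2 * 2 ^ s" by simp
  moreover have "(1::nat) \<le> 2 ^ s" by simp
  moreover have "2 * Suc s = 2 * s + 2" by simp
  ultimately show ?case using Suc.IH by linarith
qed

lemma sexp_step_bound:
  "2 ^ (2 * s + 2 ^ s) * 2 ^ sexp x (Suc m) \<le> 2 * sexp (x + 2 * s) (Suc (Suc m))"
proof -
  have "2 * s + 2 ^ s + sexp x (Suc m) \<le> sexp (x + 2 * s) (Suc m) + 1"
    using sexp_Suc_add[of x m "2 * s"] two_mul_add_pow2_le[of s] by linarith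
  then have "(2::nat) ^ (2 * s + 2 ^ s + sexp x (Suc m)) \<le> 2 ^ (sexp (x + 2 * s) (Suc m) + 1)"
    by (rule power_increasing) simp
  then show ?thesis by (simp add: power_add)
qed

definition pointed_subsets :: "'a set \<Rightarrow> ('a set \<times> 'a) set" where
  "pointed_subsets T = {(D, a). D \<subseteq> T \<and> a \<in> D}"

lemma finite_pointed_subsets: "finite T \<Longrightarrow> finite (pointed_subsets T)"
  unfolding pointed_subsets_def
  by (rule finite_subset[of _ "Pow T \<times> T"]) auto

lemma card_pointed_subsets:
  assumes "finite T"
  shows "2 * card (pointed_subsets T) = card T * 2 ^ card T"
proof -
  let ?P = "Sigma T (\<lambda>a. Pow (T - {a}))"
  have "pointed_subsets T = (\<lambda>(a, E). (insert a E, a)) ` ?P"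
    unfolding pointed_subsets_def by (auto intro!: image_eqI[of _ _ "(a, D - {a})" for a D])
  moreover have "inj_on (\<lambda>(a, E). (insert a E, a)) ?P"
    by (rule inj_on_inverseI[where g = "\<lambda>(D, a). (a, D - {a})"]) auto
  ultimately have "card (pointed_subsets T) = card ?P"
    by (simp add: card_image)
  also have "\<dots> = card T * 2 ^ (card T - 1)"
    using assms by (simp add: card_Pow card_Diff_singleton)
  finally show ?thesis
    by (cases "card T") (simp_all add: power_Suc[symmetric] del: power_Suc)
qed

definition local_types :: "'a set \<Rightarrow> ('a set \<times> 'a set set \<times> 'a set) set" where
  "local_types S = Pow S \<times> pointed_subsets (Pow S)"

lemma finite_local_types: "finite S \<Longrightarrow> finite (local_types S)"
  by (simp add: local_types_def finite_pointed_subsets)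

lemma card_local_types:
  assumes "finite S"
  shows "2 * card (local_types S) = 2 ^ (2 * card S + 2 ^ card S)"
proof -
  have "2 * card (local_types S) = 2 ^ card S * (2 * card (pointed_subsets (Pow S)))"
    using assms by (simp add: local_types_def card_cartesian_product card_Pow)
  also have "\<dots> = 2 ^ card S * (2 ^ card S * 2 ^ 2 ^ card S)"
    using assms by (simp add: card_pointed_subsets card_Pow)
  finally show ?thesis by (simp add: power_add mult_2)
qed

lemma factor_through:
  assumes "\<And>x y. x \<in> A \<Longrightarrow> y \<in> A \<Longrightarrow> f x = f y \<Longrightarrow> g x = g y"
  obtains h where "\<And>x. x \<in> A \<Longrightarrow> g x = h (f x)"
proof
  fix x assume "x \<in> A"
  then show "g x = (g \<circ> inv_into A f) (f x)"
    using assms inv_into_into f_inv_into_f by (metis comp_apply image_eqI)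
qed

lemma card_image_le_if_factors:
  assumes "finite (f ` A)" and "\<And>x y. x \<in> A \<Longrightarrow> y \<in> A \<Longrightarrow> f x = f y \<Longrightarrow> g x = g y"
  shows "finite (g ` A) \<and> card (g ` A) \<le> card (f ` A)"
proof -
  obtain h where "\<And>x. x \<in> A \<Longrightarrow> g x = h (f x)"
    using factor_through assms(2) by blast
  then have "g ` A = h ` f ` A" by (simp add: image_image cong: image_cong)
  then show ?thesis using assms(1) card_image_le by simp
qed

definition height_le :: "'w set \<Rightarrow> ('w \<times> 'w) set \<Rightarrow> 'w \<Rightarrow> nat \<Rightarrow> bool" where
  "height_le W le w k \<longleftrightarrow> (\<forall>m. has_chain W le w m \<longrightarrow> m \<le> k)"

lemma model_height_height_le: "model_height W le n \<Longrightarrow> w \<in> W \<Longrightarrow> height_le W le w n"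
  by (simp add: model_height_def height_le_def)

lemma has_chain_Suc:
  assumes "has_chain W le u m" and "w \<in> W" and "strict_le le w u"
  shows "has_chain W le w (Suc m)"
proof -
  obtain f where f: "f 0 = u" "\<forall>i\<le>m. f i \<in> W" "\<forall>i<m. strict_le le (f i) (f (Suc i))"
    using assms(1) unfolding has_chain_def by blast
  let ?g = "\<lambda>i. if i = 0 then w else f (i - 1)"
  have "\<forall>i<Suc m. strict_le le (?g i) (?g (Suc i))"
  proof (intro allI impI)
    fix i assume "i < Suc m"
    then show "strict_le le (?g i) (?g (Suc i))"
      using f assms(3) by (cases i) auto
  qed
  moreover have "\<forall>i\<le>Suc m. ?g i \<in> W"
    using f assms(2) by auto
  ultimately show ?thesis
    unfolding has_chain_def by (intro exI[of _ ?g]) simp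
qed

lemma height_le_strict_le:
  assumes "height_le W le w k" and "w \<in> W" and "u \<in> W" and "strict_le le w u"
  shows "0 < k \<and> height_le W le u (k - 1)"
proof -
  have "has_chain W le u 0"
    using \<open>u \<in> W\<close> unfolding has_chain_def by (intro exI[of _ "\<lambda>_. u"]) simp
  then have "1 \<le> k"
    using has_chain_Suc assms unfolding height_le_def by fastforce
  moreover have "m \<le> k - 1" if "has_chain W le u m" for m
    using has_chain_Suc[OF that assms(2,4)] assms(1) unfolding height_le_def by fastforce
  ultimately show ?thesis unfolding height_le_def by simp
qed

lemma sigma_bisim_relcomp:
  assumes Z1: "sigma_bisim W Wb le sq V \<Sigma> Z1" and Z2: "sigma_bisim W Wb le sq V \<Sigma> Z2"
  shows "sigma_bisim W Wb le sq V \<Sigma> (Z1 O Z2)"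
proof -
  have "forward_confluent le (Z1 O Z2)"
    unfolding forward_confluent_def
  proof (intro allI impI)
    fix w w' v assume "(w, w') \<in> le \<and> (w, v) \<in> Z1 O Z2"
    then obtain x where "(w, w') \<in> le" "(w, x) \<in> Z1" "(x, v) \<in> Z2" by blast
    moreover obtain x' where "(x, x') \<in> le" "(w', x') \<in> Z1"
      using Z1 calculation unfolding sigma_bisim_def forward_confluent_def by blast
    moreover obtain v' where "(v, v') \<in> le" "(x', v') \<in> Z2"
      using Z2 calculation unfolding sigma_bisim_def forward_confluent_def by blast
    ultimately show "\<exists>v'. (v, v') \<in> le \<and> (w', v') \<in> Z1 O Z2" by blast
  qed
  moreover have "backward_confluent le (Z1 O Z2)"
    unfolding backward_confluent_def
  proof (intro allI impI)
    fix w v v' assume "(w, v) \<in> Z1 O Z2 \<and> (v, v') \<in> le"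
    then obtain x where "(v, v') \<in> le" "(w, x) \<in> Z1" "(x, v) \<in> Z2" by blast
    moreover obtain x' where "(x, x') \<in> le" "(x', v') \<in> Z2"
      using Z2 calculation unfolding sigma_bisim_def backward_confluent_def by blast
    moreover obtain w' where "(w, w') \<in> le" "(w', x') \<in> Z1"
      using Z1 calculation unfolding sigma_bisim_def backward_confluent_def by blast
    ultimately show "\<exists>w'. (w, w') \<in> le \<and> (w', v') \<in> Z1 O Z2" by blast
  qed
  ultimately show ?thesis
    using Z1 Z2 unfolding sigma_bisim_def by (metis relcompE prod.inject relcomp_subset_Sigma)
qed

lemma sigma_sim_Image_subset:
  assumes "sigma_bisim W Wb le sq V \<Sigma> Z" and "(y, x) \<in> Z"
  shows "sigma_sim W Wb le sq V \<Sigma> `` {x} \<subseteq> sigma_sim W Wb le sq V \<Sigma> `` {y}"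
proof
  fix z assume "z \<in> sigma_sim W Wb le sq V \<Sigma> `` {x}"
  then obtain Z' where "sigma_bisim W Wb le sq V \<Sigma> Z'" and "(x, z) \<in> Z'"
    unfolding sigma_sim_def by blast
  then have "sigma_bisim W Wb le sq V \<Sigma> (Z O Z')" and "(y, z) \<in> Z O Z'"
    using assms sigma_bisim_relcomp by blast+
  then show "z \<in> sigma_sim W Wb le sq V \<Sigma> `` {y}"
    unfolding sigma_sim_def by blast
qed

locale bi_intuitionistic_model =
  fixes W Wb :: "'w set" and le sq :: "('w \<times> 'w) set" and V :: "nat \<Rightarrow> 'w set"
  assumes bi_model: "bi_model W Wb le sq V"
begin

lemma leq_in_W: "(w, v) \<in> le \<Longrightarrow> w \<in> W \<and> v \<in> W"
  using bi_model unfolding bi_model_def preorder_rel_def by blast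

lemma leq_refl: "w \<in> W \<Longrightarrow> (w, w) \<in> le"
  using bi_model unfolding bi_model_def preorder_rel_def by blast

lemma leq_trans: "(u, v) \<in> le \<Longrightarrow> (v, w) \<in> le \<Longrightarrow> (u, w) \<in> le"
  using bi_model unfolding bi_model_def preorder_rel_def by (meson transD)

lemma V_upward: "w \<in> V p \<Longrightarrow> (w, v) \<in> le \<Longrightarrow> v \<in> V p"
  using bi_model unfolding bi_model_def by blast

lemma Wb_upward: "w \<in> Wb \<Longrightarrow> (w, v) \<in> le \<Longrightarrow> v \<in> Wb"
  using bi_model unfolding bi_model_def by blast

lemma sat_persistent: "(w, v) \<in> le \<Longrightarrow> sat W Wb le sq V w \<phi> \<Longrightarrow> sat W Wb le sq V v \<phi>"
proof (induction \<phi> arbitrary: w v)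
  case (Atom p)
  then show ?case using V_upward by simp
next
  case Bot
  then show ?case using Wb_upward by simp
next
  case (Imp a b)
  then show ?case by (simp; meson leq_trans)
next
  case (Dia a)
  then show ?case by (simp; meson leq_trans)
next
  case (Box a)
  then show ?case by (simp; meson leq_trans)
qed auto

lemma strict_le_height_le:
  assumes "height_le W le w k" and "strict_le le w x"
  shows "0 < k \<and> x \<in> W \<and> height_le W le x (k - 1)"
proof -
  have "w \<in> W" and "x \<in> W"
    using assms(2) leq_in_W unfolding strict_le_def by blast+
  then show ?thesis
    using height_le_strict_le[OF assms(1) _ _ assms(2)] by blast
qed

end

locale labelled_model = bi_intuitionistic_model W Wb le sq V
    for W Wb :: "'w set" and le sq :: "('w \<times> 'w) set" and V :: "nat \<Rightarrow> 'w set" +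
  fixes \<Sigma> :: "fm set"
  assumes finite_\<Sigma>: "finite \<Sigma>"
begin

abbreviation "lab_pos \<equiv> label_pos W Wb le sq V \<Sigma>"
abbreviation "lab_dia \<equiv> label_dia W Wb le sq V \<Sigma>"

definition cluster :: "'w \<Rightarrow> 'w set" where
  "cluster w = {u. (w, u) \<in> le \<and> (u, w) \<in> le}"

definition local_type :: "'w \<Rightarrow> fm set \<times> fm set set \<times> fm set" where
  "local_type w = (lab_pos w, lab_dia ` cluster w, lab_dia w)"

text \<open>The level-k signature of a successor enters the level-(k+1) signature through its
  class of worlds with the same level-k signature, since in HOL the type of a signature cannot
  depend on its level.\<close>
primrec sig :: "nat \<Rightarrow> 'w \<Rightarrow> (fm set \<times> fm set set \<times> fm set) \<times> 'w set set" where
  "sig 0 w = (local_type w, {})"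
| "sig (Suc k) w = (local_type w, (\<lambda>u. {v \<in> W. sig k v = sig k u}) ` {u. strict_le le w u})"

definition sig_class :: "nat \<Rightarrow> 'w \<Rightarrow> 'w set" where
  "sig_class k x = {v \<in> W. sig k v = sig k x}"

lemma sig_Suc: "sig (Suc k) w = (local_type w, sig_class k ` {u. strict_le le w u})"
  by (simp add: sig_class_def)

declare sig.simps(2) [simp del]

lemma sig_class_eq_iff: "x \<in> W \<Longrightarrow> sig_class k x = sig_class k y \<longleftrightarrow> sig k x = sig k y"
  unfolding sig_class_def by (rule iffI) (blast, simp)

lemma self_in_cluster: "w \<in> W \<Longrightarrow> w \<in> cluster w"
  unfolding cluster_def using leq_refl by blast

lemma local_type_in_local_types:
  assumes "w \<in> W"
  shows "local_type w \<in> local_types \<Sigma>"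
proof -
  have "lab_pos w \<subseteq> \<Sigma>" and "lab_dia ` cluster w \<subseteq> Pow \<Sigma>"
    unfolding label_pos_def label_dia_def by blast+
  moreover have "lab_dia w \<in> lab_dia ` cluster w"
    using self_in_cluster[OF assms] by blast
  ultimately show ?thesis
    unfolding local_type_def local_types_def pointed_subsets_def by blast
qed

lemma cluster_eq: "u \<in> cluster w \<Longrightarrow> cluster u = cluster w"
  unfolding cluster_def using leq_trans by blast

lemma lab_pos_cluster: "u \<in> cluster w \<Longrightarrow> lab_pos u = lab_pos w"
  unfolding cluster_def label_pos_def using sat_persistent by blast

lemma strict_le_cluster: "u \<in> cluster w \<Longrightarrow> strict_le le u x \<longleftrightarrow> strict_le le w x"
  unfolding cluster_def strict_le_def using leq_trans by blast

lemma sig_Suc_cluster: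
  assumes "u \<in> cluster w" and "u' \<in> cluster w'" and "lab_dia u = lab_dia u'"
    and "sig (Suc k) w = sig (Suc k) w'"
  shows "sig (Suc k) u = sig (Suc k) u'"
proof -
  have "local_type w = local_type w'"
    using assms(4) by (simp add: sig_Suc)
  then have "local_type u = local_type u'"
    using assms(3) cluster_eq[OF assms(1)] cluster_eq[OF assms(2)]
      lab_pos_cluster[OF assms(1)] lab_pos_cluster[OF assms(2)]
    unfolding local_type_def by simp
  moreover have "{x. strict_le le u x} = {x. strict_le le w x}"
    and "{x. strict_le le u' x} = {x. strict_le le w' x}"
    using strict_le_cluster[OF assms(1)] strict_le_cluster[OF assms(2)] by blast+
  ultimately show ?thesis
    using assms(4) by (simp add: sig_Suc)
qed

lemma card_sig_image:
  "finite (sig k ` W) \<and> card (sig k ` W) \<le> sexp (2 * (k + 1) * card \<Sigma>) (k + 2)"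
proof (induction k)
  case 0
  let ?s = "card \<Sigma>"
  let ?T = "local_types \<Sigma> \<times> ({{}} :: 'w set set set)"
  have sub: "sig 0 ` W \<subseteq> ?T"
    using local_type_in_local_types by auto
  have fin: "finite ?T"
    using finite_local_types[OF finite_\<Sigma>] by simp
  have "2 * card (sig 0 ` W) \<le> 2 * card ?T"
    by (intro mult_le_mono2 card_mono[OF fin sub])
  also have "\<dots> \<le> 2 ^ (2 * ?s + 2 ^ ?s) * 2 ^ sexp 0 (Suc 0)"
    using card_local_types[OF finite_\<Sigma>] by (simp add: card_cartesian_product)
  also have "\<dots> \<le> 2 * sexp (0 + 2 * ?s) (Suc (Suc 0))"
    by (rule sexp_step_bound)
  also have "\<dots> = 2 * sexp (2 * (0 + 1) * ?s) (0 + 2)"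
    by (simp only: numeral_2_eq_2 add_0 mult_1_right mult_1 add_0_right)
  finally show ?case
    using finite_subset[OF sub fin] by linarith
next
  case (Suc k)
  let ?s = "card \<Sigma>" and ?classes = "sig_class k ` W"
  have fin_classes: "finite ?classes" and card_classes: "card ?classes \<le> card (sig k ` W)"
    using card_image_le_if_factors[of "sig k" W "sig_class k"] Suc.IH sig_class_eq_iff by auto
  have "sig_class k ` {u. strict_le le w u} \<subseteq> ?classes" for w
    using leq_in_W unfolding strict_le_def by blast
  then have sub: "sig (Suc k) ` W \<subseteq> local_types \<Sigma> \<times> Pow ?classes"
    using local_type_in_local_types by (auto simp: sig_Suc)
  have fin: "finite (local_types \<Sigma> \<times> Pow ?classes)"
    using finite_local_types[OF finite_\<Sigma>] fin_classes by simp
  have "2 * card (sig (Suc k) ` W) \<le> 2 * card (local_types \<Sigma> \<times> Pow ?classes)"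
    by (intro mult_le_mono2 card_mono[OF fin sub])
  also have "\<dots> = 2 ^ (2 * ?s + 2 ^ ?s) * 2 ^ card ?classes"
    using card_local_types[OF finite_\<Sigma>] fin_classes
    by (simp add: card_cartesian_product card_Pow)
  also have "\<dots> \<le> 2 ^ (2 * ?s + 2 ^ ?s) * 2 ^ sexp (2 * (k + 1) * ?s) (Suc (k + 1))"
    using card_classes Suc.IH by (intro mult_le_mono2 power_increasing) simp_all
  also have "\<dots> \<le> 2 * sexp (2 * (k + 1) * ?s + 2 * ?s) (Suc (Suc (k + 1)))"
    by (rule sexp_step_bound)
  also have "2 * (k + 1) * ?s + 2 * ?s = 2 * (Suc k + 1) * ?s"
    by simp
  also have "Suc (Suc (k + 1)) = Suc k + 2"
    by simp
  finally show ?case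
    using finite_subset[OF sub fin] by linarith
qed

lemma sig_Suc_eq_if_sig_eq:
  assumes "height_le W le u k" and "height_le W le u' k" and "sig k u = sig k u'"
  shows "sig (Suc k) u = sig (Suc k) u'"
  using assms
proof (induction k arbitrary: u u')
  case 0
  then have "{x. strict_le le u x} = {}" and "{x. strict_le le u' x} = {}"
    using strict_le_height_le[OF "0.prems"(1)] strict_le_height_le[OF "0.prems"(2)] by blast+
  then show ?case using "0.prems"(3) by (simp add: sig_Suc)
next
  case (Suc k)
  let ?succ = "{x. strict_le le u x} \<union> {x. strict_le le u' x}"
  have succ: "x \<in> W \<and> height_le W le x k" if "x \<in> ?succ" for x
    using that strict_le_height_le[OF Suc.prems(1)] strict_le_height_le[OF Suc.prems(2)]
    by fastforce
  have "sig_class (Suc k) x = sig_class (Suc k) y"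
    if "x \<in> ?succ" and "y \<in> ?succ" and "sig_class k x = sig_class k y" for x y
  proof -
    have "sig k x = sig k y"
      using that(3) succ[OF that(1)] sig_class_eq_iff by blast
    then have "sig (Suc k) x = sig (Suc k) y"
      using Suc.IH succ[OF that(1)] succ[OF that(2)] by blast
    then show ?thesis
      unfolding sig_class_def by simp
  qed
  then obtain h where h: "\<And>x. x \<in> ?succ \<Longrightarrow> sig_class (Suc k) x = h (sig_class k x)"
    using factor_through[of ?succ "sig_class k" "sig_class (Suc k)"] by blast
  have image_eq: "sig_class (Suc k) ` A = h ` sig_class k ` A" if "A \<subseteq> ?succ" for A
  proof -
    have "sig_class (Suc k) ` A = (\<lambda>x. h (sig_class k x)) ` A"
      using that h by (intro image_cong) auto
    then show ?thesis
      by (simp add: image_image)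
  qed
  have "local_type u = local_type u'"
    and "sig_class k ` {x. strict_le le u x} = sig_class k ` {x. strict_le le u' x}"
    using Suc.prems(3) by (simp_all add: sig_Suc)
  then show ?case
    by (simp only: sig_Suc image_eq[OF Un_upper1] image_eq[OF Un_upper2])
qed

end

locale bounded_height = labelled_model W Wb le sq V \<Sigma>
    for W Wb :: "'w set" and le sq :: "('w \<times> 'w) set" and V :: "nat \<Rightarrow> 'w set"
    and \<Sigma> :: "fm set" +
  fixes n :: nat
  assumes height_le_n: "w \<in> W \<Longrightarrow> height_le W le w n"
begin

lemma sig_n_eq_imp_sig_Suc_n_eq: "w \<in> W \<Longrightarrow> v \<in> W \<Longrightarrow> sig n w = sig n v \<Longrightarrow> sig (Suc n) w = sig (Suc n) v"
  using sig_Suc_eq_if_sig_eq height_le_n by blast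

definition same_sig :: "('w \<times> 'w) set" where
  "same_sig = {(w, v). w \<in> W \<and> v \<in> W \<and> sig (Suc n) w = sig (Suc n) v}"

lemma same_sig_sym: "(w, v) \<in> same_sig \<Longrightarrow> (v, w) \<in> same_sig"
  unfolding same_sig_def by auto

lemma same_sig_forward:
  assumes "(w, v) \<in> same_sig" and "(w, w') \<in> le"
  shows "\<exists>v'. (v, v') \<in> le \<and> (w', v') \<in> same_sig"
proof -
  have "v \<in> W" and "w' \<in> W" and eq: "sig (Suc n) w = sig (Suc n) v"
    using assms leq_in_W unfolding same_sig_def by auto
  consider "w' \<in> cluster w" | "strict_le le w w'"
    using assms(2) unfolding cluster_def strict_le_def by blast
  then show ?thesis
  proof cases
    case 1
    have "lab_dia ` cluster w = lab_dia ` cluster v"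
      using eq by (simp add: sig_Suc local_type_def)
    then obtain v' where "v' \<in> cluster v" and "lab_dia v' = lab_dia w'"
      using 1 by (metis imageE imageI)
    moreover from this have "(v, v') \<in> le" and "v' \<in> W"
      using leq_in_W unfolding cluster_def by blast+
    moreover have "sig (Suc n) w' = sig (Suc n) v'"
      using sig_Suc_cluster[OF 1 \<open>v' \<in> cluster v\<close>] \<open>lab_dia v' = lab_dia w'\<close> eq by simp
    ultimately show ?thesis
      using \<open>w' \<in> W\<close> unfolding same_sig_def by blast
  next
    case 2
    have "sig_class n ` {u. strict_le le w u} = sig_class n ` {u. strict_le le v u}"
      using eq by (simp add: sig_Suc)
    then obtain v' where "strict_le le v v'" and "sig_class n w' = sig_class n v'"
      using 2 by (metis (mono_tags, lifting) imageE imageI mem_Collect_eq)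
    moreover from this have "v' \<in> W"
      using leq_in_W unfolding strict_le_def by blast
    ultimately have "(v, v') \<in> le" and "sig (Suc n) w' = sig (Suc n) v'"
      using sig_n_eq_imp_sig_Suc_n_eq sig_class_eq_iff \<open>w' \<in> W\<close> unfolding strict_le_def by blast+
    then show ?thesis
      using \<open>w' \<in> W\<close> \<open>v' \<in> W\<close> unfolding same_sig_def by blast
  qed
qed

lemma same_sig_sigma_bisim: "sigma_bisim W Wb le sq V \<Sigma> same_sig"
proof -
  have "forward_confluent le same_sig"
    unfolding forward_confluent_def using same_sig_forward by blast
  moreover have "backward_confluent le same_sig"
    unfolding backward_confluent_def using same_sig_forward same_sig_sym by blast
  moreover have "lab_pos w = lab_pos v \<and> lab_dia w = lab_dia v" if "(w, v) \<in> same_sig" for w v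
    using that unfolding same_sig_def by (simp add: sig_Suc local_type_def)
  ultimately show ?thesis
    unfolding sigma_bisim_def same_sig_def by blast
qed

lemma card_quotient_sigma_sim:
  "finite (W // sigma_sim W Wb le sq V \<Sigma>) \<and>
   card (W // sigma_sim W Wb le sq V \<Sigma>) \<le> card (sig n ` W)"
proof -
  let ?R = "sigma_sim W Wb le sq V \<Sigma>"
  have "finite (sig n ` W)"
    using card_sig_image by blast
  moreover have "?R `` {x} = ?R `` {y}" if "x \<in> W" and "y \<in> W" and "sig n x = sig n y" for x y
  proof -
    have "(x, y) \<in> same_sig"
      using that sig_n_eq_imp_sig_Suc_n_eq unfolding same_sig_def by blast
    then show ?thesis
      using sigma_sim_Image_subset[OF same_sig_sigma_bisim] same_sig_sym
      by (intro equalityI) blast+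
  qed
  ultimately have "finite ((\<lambda>x. ?R `` {x}) ` W) \<and> card ((\<lambda>x. ?R `` {x}) ` W) \<le> card (sig n ` W)"
    by (rule card_image_le_if_factors)
  moreover have "W // ?R = (\<lambda>x. ?R `` {x}) ` W"
    unfolding quotient_def by blast
  ultimately show ?thesis
    by (simp only:)
qed

end

theorem mainTheorem12:
  fixes W Wb :: "'w set" and le sq :: "('w \<times> 'w) set" and V :: "nat \<Rightarrow> 'w set"
    and \<Sigma> :: "fm set" and n s :: nat
  assumes "bi_model W Wb le sq V"
    and "model_height W le n"
    and "finite \<Sigma>" and "card \<Sigma> = s"
  shows "finite (W // sigma_sim W Wb le sq V \<Sigma>) \<and>
         card (W // sigma_sim W Wb le sq V \<Sigma>) \<le> sexp (2 * (n + 1) * s) (n + 2)"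
proof -
  interpret bounded_height W Wb le sq V \<Sigma> n
    using assms(1-3) model_height_height_le by unfold_locales auto
  have "card (sig n ` W) \<le> sexp (2 * (n + 1) * s) (n + 2)"
    using card_sig_image[of n] unfolding assms(4) by blast
  then show ?thesis
    using card_quotient_sigma_sim le_trans by blast
qed

end
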